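(* Let $N\ge2$, $1^*=N/(N-1)$, $\epsilon>0$, let $f$ satisfy $(f_1)$–$(f_5)$ and $V$ satisfy $(V_1)$–$(V_2)$ (as in the context). Let $(v_n)\subset BV(\mathbb{R}^N)$ and $\tau_n\to0$ be such that $\lim_{n\to\infty}\Phi_\epsilon(v_n)=c_\epsilon$ and $$\|w\|_\epsilon-\|v_n\|_\epsilon\ge\int_{\mathbb{R}^N}f(v_n)(w-v_n)\,dx-\tau_n\|w-v_n\|_\epsilon\quad\forall w\in BV(\mathbb{R}^N).$$ Then $(v_n)$ is bounded in $BV(\mathbb{R}^N)$.
   Context: Assumptions: $(f_1)$ $f\in C^1(\mathbb{R})$; $(f_2)$ $f(s)=o(1)$ as $s\to0$; $(f_3)$ $|f(s)|\le c_1+c_2|s|^{p-1}$ for some $c_1,c_2>0$, $p\in[1,1^* )$; $(f_4)$ there is $\theta>1$ with $0<\theta F(s)\le f(s)s$ for $s\ne0$, $F(s)=\int_0^sf$; $(f_5)$ $f$ is increasing; $(V_1)$ $V\in L^\infty(\mathbb{R}^N)$, $V_0:=\inf V>0$; $(V_2)$ $\liminf_{|x|\to\infty}V(x)>V_0$. Notation: $\|v\|_\epsilon=\int_{\mathbb{R}^N}|Dv|+\int_{\mathbb{R}^N}V(\epsilon x)|v|\,dx$ (a norm on $BV(\mathbb{R}^N)$ equivalent to the usual one), $\Phi_\epsilon(v)=\|v\|_\epsilon-\int_{\mathbb{R}^N}F(v)\,dx$, and $c_\epsilon=\inf_{\gamma\in\Gamma_\epsilon}\sup_{t\in[0,1]}\Phi_\epsilon(\gamma(t))$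 with $\Gamma_\epsilon=\{\gamma\in C([0,1],BV(\mathbb{R}^N)):\gamma(0)=0,\ \Phi_\epsilon(\gamma(1))<0\}$. *)

theory Defs
  imports "HOL-Analysis.Analysis"
begin

definition divergence :: "(real^'n \<Rightarrow> real^'n) \<Rightarrow> real^'n \<Rightarrow> real" where
  "divergence \<phi> x = (\<Sum>i\<in>UNIV. (frechet_derivative \<phi> (at x) (axis i 1)) $ i)"

definition test_fields :: "(real^'n \<Rightarrow> real^'n) set" where
  "test_fields = {\<phi>. (\<forall>x. \<phi> differentiable (at x))
      \<and> (\<forall>i j. continuous_on UNIV (\<lambda>x. (frechet_derivative \<phi> (at x) (axis j 1)) $ i))
      \<and> bounded {x. \<phi> x \<noteq> 0}
      \<and> (\<forall>x. norm (\<phi> x) \<le> 1)}"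

definition total_variation :: "(real^'n \<Rightarrow> real) \<Rightarrow> ereal" where
  "total_variation u = (SUP \<phi>\<in>test_fields. ereal (LINT x|lebesgue. u x * divergence \<phi> x))"

definition BV :: "(real^'n \<Rightarrow> real) set" where
  "BV = {u. integrable lebesgue u \<and> total_variation u < \<infinity>}"

definition bv_norm :: "(real^'n \<Rightarrow> real) \<Rightarrow> real" where
  "bv_norm u = real_of_ereal (total_variation u) + (LINT x|lebesgue. \<bar>u x\<bar>)"

definition eps_norm :: "(real^'n \<Rightarrow> real) \<Rightarrow> real \<Rightarrow> (real^'n \<Rightarrow> real) \<Rightarrow> real" where
  "eps_norm V \<epsilon> v = real_of_ereal (total_variation v) + (LINT x|lebesgue. V (\<epsilon> *\<^sub>R x) * \<bar>v x\<bar>)"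

definition prim :: "(real \<Rightarrow> real) \<Rightarrow> real \<Rightarrow> real" where
  "prim f s = (LBINT t=0..s. f t)"

definition Phi :: "(real \<Rightarrow> real) \<Rightarrow> (real^'n \<Rightarrow> real) \<Rightarrow> real \<Rightarrow> (real^'n \<Rightarrow> real) \<Rightarrow> real" where
  "Phi f V \<epsilon> v = eps_norm V \<epsilon> v - (LINT x|lebesgue. prim f (v x))"

definition Gamma :: "(real \<Rightarrow> real) \<Rightarrow> (real^'n \<Rightarrow> real) \<Rightarrow> real \<Rightarrow> (real \<Rightarrow> (real^'n \<Rightarrow> real)) set" where
  "Gamma f V \<epsilon> = {\<gamma>. (\<forall>t\<in>{0..1}. \<gamma> t \<in> BV)
      \<and> (\<forall>t\<in>{0..1}. \<forall>e>0. \<exists>d>0. \<forall>s\<in>{0..1}. \<bar>s - t\<bar> < d \<longrightarrow> eps_norm V \<epsilon> (\<lambda>x. \<gamma> s x - \<gamma> t x) < e)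
      \<and> \<gamma> 0 = (\<lambda>x. 0) \<and> Phi f V \<epsilon> (\<gamma> 1) < 0}"

definition mp_level :: "(real \<Rightarrow> real) \<Rightarrow> (real^'n \<Rightarrow> real) \<Rightarrow> real \<Rightarrow> real" where
  "mp_level f V \<epsilon> = Inf {(SUP t\<in>{0..1}. Phi f V \<epsilon> (\<gamma> t)) | \<gamma>. \<gamma> \<in> Gamma f V \<epsilon>}"

end

theory Submission
  imports Defs
begin

text \<open>Testing the almost-criticality inequality with \<open>w = 2 v\<^sub>n\<close> gives
  \<open>\<integral> f(v\<^sub>n) v\<^sub>n \<le> (1 + \<tau>\<^sub>n) \<parallel>v\<^sub>n\<parallel>\<^sub>\<epsilon>\<close>, because \<open>\<parallel>\<cdot>\<parallel>\<^sub>\<epsilon>\<close> is positively homogeneous.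
  The Ambrosetti--Rabinowitz condition \<open>\<theta> F(s) \<le> f(s) s\<close> then yields
  \<open>(1 - (1 + \<tau>\<^sub>n)/\<theta>) \<parallel>v\<^sub>n\<parallel>\<^sub>\<epsilon> \<le> \<Phi>\<^sub>\<epsilon>(v\<^sub>n)\<close>, and the right-hand side is bounded since it
  converges to \<open>c\<^sub>\<epsilon>\<close>. As \<open>\<tau>\<^sub>n \<rightarrow> 0\<close> and \<open>\<theta> > 1\<close>, the factor on the left is eventually
  bounded away from 0; finally \<open>\<parallel>\<cdot>\<parallel>\<^sub>\<epsilon>\<close> dominates a multiple of the BV norm because
  \<open>V \<ge> inf V > 0\<close>.\<close>

lemma zero_in_test_fields: "(\<lambda>x. 0) \<in> test_fields"
  by (simp add: test_fields_def)

lemma total_variation_nonneg: "total_variation (u :: real^'n \<Rightarrow> real) \<ge> 0"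
proof -
  have "divergence (\<lambda>x::real^'n. 0::real^'n) = (\<lambda>x. 0)"
    by (simp add: divergence_def fun_eq_iff)
  then show ?thesis
    unfolding total_variation_def by (intro order_trans[OF _ SUP_upper[OF zero_in_test_fields]]) simp
qed

lemma total_variation_zero: "total_variation (\<lambda>x::real^'n. 0) = 0"
  unfolding total_variation_def by (simp, subst SUP_const) (use zero_in_test_fields in auto)

lemma frechet_derivative_uminus:
  assumes "\<phi> differentiable (at x)"
  shows "frechet_derivative (\<lambda>x. - \<phi> x) (at x) = (\<lambda>h. - frechet_derivative \<phi> (at x) h)"
  by (rule frechet_derivative_at[symmetric], rule has_derivative_minus,
      rule frechet_derivative_works[THEN iffD1, OF assms])

lemma divergence_uminus:
  assumes "\<phi> differentiable (at x)"
  shows "divergence (\<lambda>x. - \<phi> x) x = - divergence \<phi> x"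
  by (simp add: divergence_def frechet_derivative_uminus[OF assms] sum_negf)

lemma uminus_in_test_fields:
  assumes "\<phi> \<in> test_fields"
  shows "(\<lambda>x. - \<phi> x) \<in> test_fields"
proof -
  have d: "\<And>x. \<phi> differentiable (at x)"
    and c: "\<And>i j. continuous_on UNIV (\<lambda>x. (frechet_derivative \<phi> (at x) (axis j 1)) $ i)"
    and b: "bounded {x. \<phi> x \<noteq> 0}" "\<And>x. norm (\<phi> x) \<le> 1"
    using assms by (auto simp: test_fields_def)
  have "continuous_on UNIV (\<lambda>x. (frechet_derivative (\<lambda>x. - \<phi> x) (at x) (axis j 1)) $ i)" for i j
    using continuous_on_minus[OF c[of j i]] by (simp add: frechet_derivative_uminus[OF d])
  moreover have "{x. - \<phi> x \<noteq> 0} = {x. \<phi> x \<noteq> 0}" by auto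
  ultimately show ?thesis
    using b differentiable_minus[OF d] unfolding test_fields_def by auto
qed

lemma total_variation_uminus:
  fixes u :: "real^'n \<Rightarrow> real"
  shows "total_variation (\<lambda>x. - u x) = total_variation u"
  unfolding total_variation_def
proof (rule SUP_eq)
  fix \<phi> :: "real^'n \<Rightarrow> real^'n"
  assume \<phi>: "\<phi> \<in> test_fields"
  then have "\<And>x. \<phi> differentiable (at x)" by (simp add: test_fields_def)
  note div_uminus = divergence_uminus[OF this]
  show "\<exists>\<psi>\<in>test_fields. ereal (LINT x|lebesgue. - u x * divergence \<phi> x)
      \<le> ereal (LINT x|lebesgue. u x * divergence \<psi> x)"
    by (rule bexI[of _ "\<lambda>x. - \<phi> x"]) (auto simp: div_uminus uminus_in_test_fields[OF \<phi>])
  show "\<exists>\<psi>\<in>test_fields. ereal (LINT x|lebesgue. u x * divergence \<phi> x)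
      \<le> ereal (LINT x|lebesgue. - u x * divergence \<psi> x)"
    by (rule bexI[of _ "\<lambda>x. - \<phi> x"]) (auto simp: div_uminus uminus_in_test_fields[OF \<phi>])
qed

lemma total_variation_cmult_le:
  fixes u :: "real^'n \<Rightarrow> real"
  assumes "c \<ge> 0"
  shows "total_variation (\<lambda>x. c * u x) \<le> ereal c * total_variation u"
  unfolding total_variation_def
proof (rule SUP_least)
  fix \<phi> :: "real^'n \<Rightarrow> real^'n"
  assume "\<phi> \<in> test_fields"
  then have "ereal (LINT x|lebesgue. u x * divergence \<phi> x)
      \<le> (SUP \<psi>\<in>test_fields. ereal (LINT x|lebesgue. u x * divergence \<psi> x))"
    by (rule SUP_upper)
  then have "ereal c * ereal (LINT x|lebesgue. u x * divergence \<phi> x)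
      \<le> ereal c * (SUP \<psi>\<in>test_fields. ereal (LINT x|lebesgue. u x * divergence \<psi> x))"
    using assms by (intro ereal_mult_left_mono) auto
  then show "ereal (LINT x|lebesgue. c * u x * divergence \<phi> x)
      \<le> ereal c * (SUP \<psi>\<in>test_fields. ereal (LINT x|lebesgue. u x * divergence \<psi> x))"
    by (simp add: mult.assoc)
qed

lemma total_variation_finite:
  assumes "u \<in> BV"
  obtains r where "total_variation u = ereal r" "r \<ge> 0"
  using assms total_variation_nonneg[of u] unfolding BV_def
  by (cases "total_variation u") auto

lemma zero_in_BV: "(\<lambda>x. 0) \<in> BV"
  by (simp add: BV_def total_variation_zero)

lemma cmult_in_BV_and_total_variation_le:
  assumes "u \<in> BV" "c \<ge> 0"
  shows "(\<lambda>x. c * u x) \<in> BV"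
    and "real_of_ereal (total_variation (\<lambda>x. c * u x)) \<le> c * real_of_ereal (total_variation u)"
proof -
  obtain r where r: "total_variation u = ereal r" "r \<ge> 0"
    using total_variation_finite[OF assms(1)] .
  have "total_variation (\<lambda>x. c * u x) \<le> ereal (c * r)"
    using total_variation_cmult_le[OF assms(2), of u] r by simp
  moreover have "total_variation (\<lambda>x. c * u x) \<ge> 0" by (rule total_variation_nonneg)
  ultimately obtain s where s: "total_variation (\<lambda>x. c * u x) = ereal s" "s \<le> c * r"
    by (cases "total_variation (\<lambda>x. c * u x)") auto
  show "(\<lambda>x. c * u x) \<in> BV" using assms(1) s unfolding BV_def by auto
  show "real_of_ereal (total_variation (\<lambda>x. c * u x)) \<le> c * real_of_ereal (total_variation u)"
    using s r by simp
qed

lemma eps_norm_zero: "eps_norm V e (\<lambda>x. 0) = 0"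
  by (simp add: eps_norm_def total_variation_zero)

lemma eps_norm_uminus: "eps_norm V e (\<lambda>x. - u x) = eps_norm V e u"
  by (simp add: eps_norm_def total_variation_uminus)

lemma eps_norm_cmult_le:
  assumes "u \<in> BV" "c \<ge> 0"
  shows "eps_norm V e (\<lambda>x. c * u x) \<le> c * eps_norm V e u"
proof -
  have "(LINT x|lebesgue. V (e *\<^sub>R x) * \<bar>c * u x\<bar>) = c * (LINT x|lebesgue. V (e *\<^sub>R x) * \<bar>u x\<bar>)"
    using assms(2) by (simp add: abs_mult mult.left_commute)
  then show ?thesis
    using cmult_in_BV_and_total_variation_le(2)[OF assms] unfolding eps_norm_def
    by (simp add: distrib_left)
qed

lemma eps_norm_nonneg:
  assumes "\<And>x. V x \<ge> 0"
  shows "eps_norm V e u \<ge> 0"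
proof -
  have "real_of_ereal (total_variation u) \<ge> 0"
    by (simp add: total_variation_nonneg real_of_ereal_pos)
  moreover have "(LINT x|lebesgue. V (e *\<^sub>R x) * \<bar>u x\<bar>) \<ge> 0"
    using assms by (intro integral_nonneg_AE always_eventually allI mult_nonneg_nonneg) auto
  ultimately show ?thesis unfolding eps_norm_def by simp
qed

lemma AE_lebesgue_scaleR:
  fixes P :: "'a::euclidean_space \<Rightarrow> bool"
  assumes "AE x in lebesgue. P x" "c \<noteq> 0"
  shows "AE x in lebesgue. P (c *\<^sub>R x)"
proof -
  obtain N where N: "{x \<in> space lebesgue. \<not> P x} \<subseteq> N" "emeasure lebesgue N = 0"
      "N \<in> sets lebesgue"
    using AE_E[OF assms(1)] .
  define S where "S = (\<lambda>x::'a. c *\<^sub>R x) -` N"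
  have S_sets: "S \<in> sets lebesgue"
    using measurable_sets[OF lebesgue_measurable_scaling[of c] N(3)] by (simp add: S_def)
  have "S = (\<lambda>x. (1/c) *\<^sub>R x + 0) ` N"
    using assms(2) unfolding S_def by (auto simp: image_iff intro!: bexI[of _ "c *\<^sub>R _"])
  then have "emeasure lebesgue S = \<bar>1/c\<bar> ^ DIM('a) * emeasure lebesgue N"
    using emeasure_lebesgue_affine[of "1/c" 0 N] by simp
  also have "\<dots> = 0" using N(2) by simp
  finally have "S \<in> null_sets lebesgue" using S_sets by (simp add: null_sets_def)
  moreover have "{x \<in> space lebesgue. \<not> P (c *\<^sub>R x)} \<subseteq> S"
    using N(1) unfolding S_def by auto
  ultimately show ?thesis by (rule AE_I')
qed

lemma bv_norm_le_eps_norm: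
  assumes u: "u \<in> BV" and e: "e \<noteq> 0"
    and V_meas: "V \<in> borel_measurable lebesgue" and V_bdd: "AE x in lebesgue. \<bar>V x\<bar> \<le> M"
    and V_lower: "\<And>x. V0 \<le> V x" and V0: "V0 \<ge> 0"
  shows "min 1 V0 * bv_norm u \<le> eps_norm V e u"
proof -
  have u_int: "integrable lebesgue u" using u by (simp add: BV_def)
  have V_scaled_bdd: "AE x in lebesgue. \<bar>V (e *\<^sub>R x)\<bar> \<le> M"
    using AE_lebesgue_scaleR[OF V_bdd e] .
  have weighted_int: "integrable lebesgue (\<lambda>x. V (e *\<^sub>R x) * \<bar>u x\<bar>)"
  proof (rule Bochner_Integration.integrable_bound[of _ "\<lambda>x. M * \<bar>u x\<bar>"])
    show "integrable lebesgue (\<lambda>x. M * \<bar>u x\<bar>)" using u_int by auto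
    show "(\<lambda>x. V (e *\<^sub>R x) * \<bar>u x\<bar>) \<in> borel_measurable lebesgue"
      using measurable_compose[OF lebesgue_measurable_scaling V_meas] u_int
      by (simp add: comp_def) measurable
    show "AE x in lebesgue. norm (V (e *\<^sub>R x) * \<bar>u x\<bar>) \<le> norm (M * \<bar>u x\<bar>)"
      using V_scaled_bdd by eventually_elim (auto simp: abs_mult intro: mult_right_mono)
  qed
  have "V0 * (LINT x|lebesgue. \<bar>u x\<bar>) \<le> (LINT x|lebesgue. V (e *\<^sub>R x) * \<bar>u x\<bar>)"
  proof -
    have "(LINT x|lebesgue. V0 * \<bar>u x\<bar>) \<le> (LINT x|lebesgue. V (e *\<^sub>R x) * \<bar>u x\<bar>)"
      using u_int weighted_int V_lower by (intro integral_mono) (auto intro: mult_right_mono)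
    then show ?thesis by simp
  qed
  moreover have "min 1 V0 * real_of_ereal (total_variation u) \<le> real_of_ereal (total_variation u)"
    using V0 by (intro mult_left_le_one_le) (simp_all add: total_variation_nonneg real_of_ereal_pos)
  moreover have "min 1 V0 * (LINT x|lebesgue. \<bar>u x\<bar>) \<le> V0 * (LINT x|lebesgue. \<bar>u x\<bar>)"
    by (intro mult_right_mono) auto
  ultimately show ?thesis unfolding bv_norm_def eps_norm_def by (simp add: distrib_left)
qed

lemma prim_zero: "prim f 0 = 0"
  unfolding prim_def zero_ereal_def by (rule interval_integral_endpoints_same)

lemma ambrosetti_rabinowitz_everywhere:
  assumes "\<theta> > 0" and AR: "\<forall>s. s \<noteq> 0 \<longrightarrow> 0 < \<theta> * prim f s \<and> \<theta> * prim f s \<le> f s * s"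
  shows "0 \<le> prim f s" and "\<theta> * prim f s \<le> f s * s" and "0 \<le> f s * s"
proof -
  show "0 \<le> prim f s"
    using assms by (cases "s = 0") (auto simp: prim_zero zero_less_mult_iff)
  moreover show "\<theta> * prim f s \<le> f s * s"
    using AR by (cases "s = 0") (auto simp: prim_zero)
  ultimately show "0 \<le> f s * s"
    using \<open>\<theta> > 0\<close> by (meson mult_nonneg_nonneg less_imp_le order_trans)
qed

text \<open>The junk value of the Bochner integral matters here: if \<open>f(u) u\<close> is not integrable,
  testing with \<open>w = 2 u\<close> says nothing, but testing with \<open>w = 0\<close> forces \<open>\<parallel>u\<parallel>\<^sub>\<epsilon> = 0\<close>.\<close>

lemma almost_critical_eps_norm_le_Phi:
  assumes V_nonneg: "\<And>x. V x \<ge> 0" and \<theta>: "\<theta> > 0"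
    and AR: "\<forall>s. s \<noteq> 0 \<longrightarrow> 0 < \<theta> * prim f s \<and> \<theta> * prim f s \<le> f s * s"
    and u: "u \<in> BV" and t: "t < 1"
    and crit: "\<forall>w\<in>BV. eps_norm V e w - eps_norm V e u
                \<ge> (LINT x|lebesgue. f (u x) * (w x - u x)) - t * eps_norm V e (\<lambda>x. w x - u x)"
  shows "(1 - (1 + t) / \<theta>) * eps_norm V e u \<le> max 0 (Phi f V e u)"
proof -
  let ?e = "eps_norm V e u" and ?g = "\<lambda>x. f (u x) * u x"
  have e_nonneg: "?e \<ge> 0" using V_nonneg by (rule eps_norm_nonneg)
  show ?thesis
  proof (cases "integrable lebesgue ?g")
    case True
    have "eps_norm V e (\<lambda>x. 2 * u x) - ?e
        \<ge> (LINT x|lebesgue. f (u x) * (2 * u x - u x)) - t * eps_norm V e (\<lambda>x. 2 * u x - u x)"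
      using crit[rule_format, OF cmult_in_BV_and_total_variation_le(1)[OF u, of 2]] by simp
    moreover have "eps_norm V e (\<lambda>x. 2 * u x) \<le> 2 * ?e"
      using eps_norm_cmult_le[OF u, of 2] by simp
    ultimately have g_le: "(LINT x|lebesgue. ?g x) \<le> (1 + t) * ?e"
      by (simp add: algebra_simps)
    have F_le: "(LINT x|lebesgue. prim f (u x)) \<le> (LINT x|lebesgue. ?g x) / \<theta>"
    proof (cases "integrable lebesgue (\<lambda>x. prim f (u x))")
      case True
      have "(LINT x|lebesgue. prim f (u x)) \<le> (LINT x|lebesgue. ?g x / \<theta>)"
        using True \<open>integrable lebesgue ?g\<close> ambrosetti_rabinowitz_everywhere(2)[OF \<theta> AR] \<theta>
        by (intro integral_mono) (auto simp: field_simps mult.commute)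
      then show ?thesis by simp
    next
      case False
      then show ?thesis
        using \<theta> ambrosetti_rabinowitz_everywhere(3)[OF \<theta> AR]
        by (simp add: not_integrable_integral_eq)
    qed
    have "(1 - (1 + t) / \<theta>) * ?e = ?e - (1 + t) * ?e / \<theta>" by (simp add: algebra_simps)
    also have "\<dots> \<le> ?e - (LINT x|lebesgue. prim f (u x))"
      using F_le g_le \<theta> by (smt (verit) divide_right_mono)
    also have "\<dots> = Phi f V e u" by (simp add: Phi_def)
    finally show ?thesis by simp
  next
    case False
    have "eps_norm V e (\<lambda>x. 0) - ?e
        \<ge> (LINT x|lebesgue. f (u x) * (0 - u x)) - t * eps_norm V e (\<lambda>x. 0 - u x)"
      using crit[rule_format, OF zero_in_BV] .
    moreover have "(LINT x|lebesgue. f (u x) * (0 - u x)) = 0"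
      using False by (simp add: not_integrable_integral_eq)
    ultimately have "(1 - t) * ?e \<le> 0"
      by (simp add: eps_norm_zero eps_norm_uminus algebra_simps)
    then have "?e = 0" using t e_nonneg by (simp add: mult_le_0_iff)
    then show ?thesis by simp
  qed
qed

lemma almost_critical_bv_norm_le:
  assumes V_meas: "V \<in> borel_measurable lebesgue" and V_bdd: "AE x in lebesgue. \<bar>V x\<bar> \<le> M"
    and V_lower: "\<And>x. V0 \<le> V x" and V0: "V0 > 0" and e: "e \<noteq> 0"
    and \<theta>: "\<theta> > 1" and AR: "\<forall>s. s \<noteq> 0 \<longrightarrow> 0 < \<theta> * prim f s \<and> \<theta> * prim f s \<le> f s * s"
    and u: "u \<in> BV" and t: "t < 1" "t < (\<theta> - 1) / 2"
    and crit: "\<forall>w\<in>BV. eps_norm V e w - eps_norm V e u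
                \<ge> (LINT x|lebesgue. f (u x) * (w x - u x)) - t * eps_norm V e (\<lambda>x. w x - u x)"
    and level: "Phi f V e u \<le> B"
  shows "bv_norm u \<le> 2 * \<theta> * max 0 B / ((\<theta> - 1) * min 1 V0)"
proof -
  let ?e = "eps_norm V e u"
  define \<kappa> where "\<kappa> = (\<theta> - 1) / (2 * \<theta>)"
  have V_nonneg: "V x \<ge> 0" for x using V0 V_lower[of x] by linarith
  have "(1 + t) / \<theta> \<le> ((\<theta> + 1) / 2) / \<theta>"
    using t \<theta> by (intro divide_right_mono) auto
  moreover have "\<kappa> = 1 - ((\<theta> + 1) / 2) / \<theta>" using \<theta> by (simp add: \<kappa>_def field_simps)
  ultimately have "\<kappa> \<le> 1 - (1 + t) / \<theta>" by simp
  then have "\<kappa> * ?e \<le> (1 - (1 + t) / \<theta>) * ?e"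
    using eps_norm_nonneg[OF V_nonneg] by (rule mult_right_mono)
  also have "\<dots> \<le> max 0 (Phi f V e u)"
    using V_nonneg \<theta> AR u t crit by (intro almost_critical_eps_norm_le_Phi) auto
  also have "\<dots> \<le> max 0 B" using level by simp
  finally have "\<kappa> * ?e \<le> max 0 B" .
  moreover have "\<kappa> * (min 1 V0 * bv_norm u) \<le> \<kappa> * ?e"
    using \<theta> u e V_meas V_bdd V_lower V0
    by (intro mult_left_mono bv_norm_le_eps_norm) (auto simp: \<kappa>_def)
  ultimately have "\<kappa> * min 1 V0 * bv_norm u \<le> max 0 B" by (simp add: mult.assoc)
  moreover have "\<kappa> * min 1 V0 > 0" using \<theta> V0 by (simp add: \<kappa>_def)
  ultimately have "bv_norm u \<le> max 0 B / (\<kappa> * min 1 V0)"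
    by (simp add: pos_le_divide_eq mult.commute)
  also have "\<dots> = 2 * \<theta> * max 0 B / ((\<theta> - 1) * min 1 V0)"
    using \<theta> by (simp add: \<kappa>_def field_simps)
  finally show ?thesis .
qed

lemma eventually_le_imp_bdd_above:
  fixes X :: "nat \<Rightarrow> 'a::linorder"
  assumes "eventually (\<lambda>n. X n \<le> C) sequentially"
  shows "bdd_above (range X)"
proof -
  obtain N where N: "\<And>n. n \<ge> N \<Longrightarrow> X n \<le> C"
    using assms by (auto simp: eventually_sequentially)
  have "X n \<le> Max (insert C (X ` {..<N}))" for n
    using N[of n] by (cases "n < N") (auto intro: order_trans[OF _ Max_ge])
  then show ?thesis by (rule bdd_aboveI2)
qed

theorem lemma3p3:
  fixes f :: "real \<Rightarrow> real" and V :: "real^'n \<Rightarrow> real" and \<epsilon> :: real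
    and v :: "nat \<Rightarrow> real^'n \<Rightarrow> real" and \<tau> :: "nat \<Rightarrow> real"
  assumes N2: "CARD('n) \<ge> 2"
    and eps: "\<epsilon> > 0"
    and f1: "\<forall>s. f differentiable (at s)" "continuous_on UNIV (deriv f)"
    and f2: "(f \<longlongrightarrow> 0) (at 0)"
    and f3: "\<exists>c1 c2 p. c1 > 0 \<and> c2 > 0 \<and> 1 \<le> p \<and> p < real CARD('n) / (real CARD('n) - 1)
               \<and> (\<forall>s. \<bar>f s\<bar> \<le> c1 + c2 * \<bar>s\<bar> powr (p - 1))"
    and f4: "\<exists>\<theta>>1. \<forall>s. s \<noteq> 0 \<longrightarrow> 0 < \<theta> * prim f s \<and> \<theta> * prim f s \<le> f s * s"
    and f5: "mono f"
    and V1: "V \<in> borel_measurable lebesgue" "\<exists>M. AE x in lebesgue. \<bar>V x\<bar> \<le> M"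
            "bdd_below (range V)" "Inf (range V) > 0"
    and V2: "Liminf at_infinity (\<lambda>x. ereal (V x)) > ereal (Inf (range V))"
    and vBV: "\<forall>n. v n \<in> BV"
    and tau: "\<tau> \<longlonglongrightarrow> 0"
    and lev: "(\<lambda>n. Phi f V \<epsilon> (v n)) \<longlonglongrightarrow> mp_level f V \<epsilon>"
    and PS: "\<forall>n. \<forall>w\<in>BV. eps_norm V \<epsilon> w - eps_norm V \<epsilon> (v n)
               \<ge> (LINT x|lebesgue. f (v n x) * (w x - v n x)) - \<tau> n * eps_norm V \<epsilon> (\<lambda>x. w x - v n x)"
  shows "\<exists>M. \<forall>n. bv_norm (v n) \<le> M"
proof -
  have V_lower: "Inf (range V) \<le> V x" for x by (rule cInf_lower[OF rangeI V1(3)])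
  obtain MV where MV: "AE x in lebesgue. \<bar>V x\<bar> \<le> MV" using V1(2) by blast
  obtain \<theta> where \<theta>: "\<theta> > 1"
    and AR: "\<forall>s. s \<noteq> 0 \<longrightarrow> 0 < \<theta> * prim f s \<and> \<theta> * prim f s \<le> f s * s"
    using f4 by blast
  have "eventually (\<lambda>n. Phi f V \<epsilon> (v n) \<le> mp_level f V \<epsilon> + 1) sequentially"
    using order_tendstoD(2)[OF lev, of "mp_level f V \<epsilon> + 1"] by (auto elim: eventually_mono)
  moreover have "eventually (\<lambda>n. \<tau> n < 1) sequentially"
    by (rule order_tendstoD(2)[OF tau]) simp
  moreover have "eventually (\<lambda>n. \<tau> n < (\<theta> - 1) / 2) sequentially"
    by (rule order_tendstoD(2)[OF tau]) (use \<theta> in simp)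
  ultimately have "eventually (\<lambda>n. bv_norm (v n)
      \<le> 2 * \<theta> * max 0 (mp_level f V \<epsilon> + 1) / ((\<theta> - 1) * min 1 (Inf (range V)))) sequentially"
  proof eventually_elim
    case (elim n)
    then show ?case
      using V1(1,4) MV V_lower eps \<theta> AR vBV PS
      by (intro almost_critical_bv_norm_le) auto
  qed
  then show ?thesis
    using eventually_le_imp_bdd_above by (fastforce simp: bdd_above_def)
qed

end
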